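(* Let $0<q<1$ and $\nu\in\mathbb{R}$. Define, for $z\in\mathbb{C}\setminus(-\infty,0]$ (principal branches of powers), $$I_\nu^{(3)}((1-q^2)z;q^2)=\sum_{k=0}^\infty\frac{q^{k(\nu+k)}(1-q^2)^k(z/2)^{\nu+2k}}{(q^2;q^2)_k\,\Gamma_{q^2}(\nu+k+1)},$$ and, for non-integer $\nu$, $$K_\nu^{(3)}((1-q^2)z;q^2)=\tfrac12 q^{-\nu^2+\nu}\Gamma_{q^2}(\nu)\Gamma_{q^2}(1-\nu)\left[I_{-\nu}^{(3)}((1-q^2)z;q^2)-I_\nu^{(3)}((1-q^2)z;q^2)\right],$$ extended to integer $\nu=n$ by taking the limit $\nu\to n$. Then $$\frac{2}{(1+q)z}\,\partial_q\!\left[z^\nu K_\nu^{(3)}((1-q^2)z;q^2)\right]=-q^{-\frac{\nu-1}{2}}z^{\nu-1}K_{\nu-1}^{(3)}((1-q^2)q^{1/2}z;q^2),$$ $$\frac{2}{(1+q)z}\,\partial_q\!\left[z^{-\nu} K_\nu^{(3)}((1-q^2)z;q^2)\right]=-q^{\frac{\nu+1}{2}}z^{-\nu-1}K_{\nu+1}^{(3)}((1-q^2)q^{1/2}z;q^2).$$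
   Context: $(a;q)_k=\prod_{j=0}^{k-1}(1-aq^j)$, $(a;q)_\infty=\prod_{j\ge0}(1-aq^j)$. The $q$-Gamma function is $\Gamma_{q}(x)=\frac{(q;q)_\infty}{(q^x;q)_\infty}(1-q)^{1-x}$, used here with base $q^2$. The $q$-derivative is $\partial_q f(z)=\frac{f(z)-f(qz)}{(1-q)z}$, applied to the function of $z$ in brackets. *)

theory Defs
  imports "HOL-Analysis.Analysis"
begin

definition qpoch :: "real \<Rightarrow> real \<Rightarrow> nat \<Rightarrow> real" where
  "qpoch a q k = (\<Prod>j<k. 1 - a * q ^ j)"

definition qpoch_inf :: "real \<Rightarrow> real \<Rightarrow> real" where
  "qpoch_inf a q = (\<Prod>j. 1 - a * q ^ j)"

text \<open>q-Gamma function. At its poles the denominator vanishes and, by the HOL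
  convention x / 0 = 0, the reciprocal 1 / qGamma is 0 there, matching the
  usual convention 1/Gamma_q = 0 at the poles.\<close>
definition qGamma :: "real \<Rightarrow> real \<Rightarrow> real" where
  "qGamma q x = qpoch_inf q q / qpoch_inf (q powr x) q * (1 - q) powr (1 - x)"

definition qderiv :: "real \<Rightarrow> (complex \<Rightarrow> complex) \<Rightarrow> complex \<Rightarrow> complex" where
  "qderiv q f z = (f z - f (complex_of_real q * z)) / ((1 - complex_of_real q) * z)"

text \<open>I3 q nu z stands for I_nu^(3)((1-q^2) z; q^2), principal branch powers.\<close>
definition I3 :: "real \<Rightarrow> real \<Rightarrow> complex \<Rightarrow> complex" where
  "I3 q \<nu> z = (\<Sum>k. complex_of_real
      (q powr (real k * (\<nu> + real k)) * (1 - q\<^sup>2) ^ k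
        / (qpoch (q\<^sup>2) (q\<^sup>2) k * qGamma (q\<^sup>2) (\<nu> + real k + 1)))
      * (z / 2) powr complex_of_real (\<nu> + 2 * real k))"

definition K3_formula :: "real \<Rightarrow> real \<Rightarrow> complex \<Rightarrow> complex" where
  "K3_formula q \<nu> z = complex_of_real
      (1/2 * q powr (- (\<nu>\<^sup>2) + \<nu>) * qGamma (q\<^sup>2) \<nu> * qGamma (q\<^sup>2) (1 - \<nu>))
      * (I3 q (- \<nu>) z - I3 q \<nu> z)"

text \<open>K3 q nu z stands for K_nu^(3)((1-q^2) z; q^2); at integer nu it is the limit.\<close>
definition K3 :: "real \<Rightarrow> real \<Rightarrow> complex \<Rightarrow> complex" where
  "K3 q \<nu> z = (if \<nu> \<notin> \<int> then K3_formula q \<nu> z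
               else Lim (at \<nu>) (\<lambda>\<mu>. K3_formula q \<mu> z))"

end

theory Submission
  imports Defs "HOL-Complex_Analysis.Complex_Analysis"
begin

text \<open>
  The defining series of \<open>I\<close> is q-differentiated termwise. The contiguous relations of its
  coefficients turn \<open>2/((1+q)z) \<partial>\<^sub>q[z^\<nu> I_\<nu>(z)]\<close> into
  \<open>q^((1-\<nu>)/2) z^(\<nu>-1) I_(\<nu>-1)(q^(1/2) z)\<close>, and the same operator applied to
  \<open>z^\<nu> I_(-\<nu>)(z)\<close> into the same expression with \<open>I_(1-\<nu>)\<close>. The prefactor
  \<open>c(\<nu>) = q^(\<nu>-\<nu>^2) \<Gamma>(\<nu>) \<Gamma>(1-\<nu>)/2\<close> of \<open>K_\<nu>\<close> satisfies \<open>c(\<nu>-1) = -c(\<nu>)\<close>, so the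
  defining formula of \<open>K_\<nu>\<close> obeys the first identity for every real \<open>\<nu>\<close>.
  At an integer \<open>n\<close> this formula has the form \<open>\<infinity> * 0\<close>: \<open>c\<close> has a simple pole at \<open>n\<close>,
  while \<open>\<mu> \<mapsto> I_(-\<mu>) - I_\<mu>\<close>, an entire function of the order, vanishes there. Hence the
  formula has a limit at \<open>n\<close> and the identity passes to the limit. The second identity is
  the first one at \<open>-\<nu>\<close>, because \<open>K_(-\<nu>) = K_\<nu>\<close>.
\<close>

lemma powr_power2_base:
  fixes q y :: real
  assumes "0 < q"
  shows "(q\<^sup>2) powr y = q powr (2 * y)"
proof -
  have "q powr (2 * y) = (q powr 2) powr y"
    by (simp only: powr_powr)
  also have "q powr 2 = q\<^sup>2"
    using assms by simp
  finally show ?thesis ..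
qed

lemma half_powr_pred: "2 * (1 / 2) powr t = (1 / 2 :: real) powr (t - 1)"
  by (simp add: powr_diff)

lemma sqrt_half_powr:
  fixes q \<nu> t :: real
  assumes "0 < q"
  shows "q powr (- (\<nu> - 1) / 2) * (q powr (1 / 2) / 2) powr t
       = q powr ((t - \<nu> + 1) / 2) * (1 / 2) powr t"
proof -
  have "(q powr (1 / 2) / 2) powr t = q powr (t / 2) * (1 / 2) powr t"
    by (simp add: powr_divide powr_powr)
  moreover have "- (\<nu> - 1) / 2 + t / 2 = (t - \<nu> + 1) / 2"
    by (simp add: field_simps)
  then have "q powr (- (\<nu> - 1) / 2) * q powr (t / 2) = q powr ((t - \<nu> + 1) / 2)"
    by (simp only: powr_add [symmetric])
  ultimately show ?thesis
    by (simp add: mult_ac)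
qed

lemma powr_of_real_mult:
  fixes r s :: real and w :: complex
  assumes "0 \<le> r"
  shows "(of_real r * w) powr of_real s = of_real (r powr s) * w powr of_real s"
  using assms by (simp add: powr_times_real_left powr_of_real)

lemma tendsto_powr_of_real_exponent:
  fixes w :: complex
  assumes "w \<noteq> 0" "(f \<longlongrightarrow> c) F"
  shows "((\<lambda>\<mu>. w powr of_real (f \<mu>)) \<longlongrightarrow> w powr of_real c) F"
  unfolding powr_def using assms by (auto intro!: tendsto_intros)

lemma tendsto_div_one_minus_powr:
  fixes a :: real
  assumes "0 < a" "a \<noteq> 1"
  shows "((\<lambda>x. x / (1 - a powr x)) \<longlongrightarrow> - 1 / ln a) (at 0)"
proof -
  have powr_eq: "a powr x = exp (x * ln a)" for x
    using assms by (simp add: powr_def)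
  have "((\<lambda>x. exp (x * ln a)) has_real_derivative ln a) (at 0)"
    by (auto intro!: derivative_eq_intros)
  then have "((\<lambda>x. (exp (x * ln a) - 1) / x) \<longlongrightarrow> ln a) (at 0)"
    by (simp add: has_field_derivative_iff)
  then have "((\<lambda>x. - inverse ((exp (x * ln a) - 1) / x)) \<longlongrightarrow> - inverse (ln a)) (at 0)"
    using assms by (intro tendsto_minus tendsto_inverse) auto
  moreover have "- inverse ((exp (x * ln a) - 1) / x) = x / (1 - a powr x)" for x
    unfolding powr_eq by (simp add: minus_divide_right)
  ultimately show ?thesis
    by (simp add: inverse_eq_divide)
qed

lemma summable_power_of_null:
  fixes x :: "nat \<Rightarrow> real"
  assumes "x \<longlonglongrightarrow> 0" "\<And>k. 0 \<le> x k"
  shows "summable (\<lambda>k. x k ^ k)"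
proof (rule summable_comparison_test_ev)
  have "eventually (\<lambda>k. x k < 1 / 2) sequentially"
    using order_tendstoD(2)[OF assms(1), of "1 / 2"] by simp
  then show "eventually (\<lambda>k. norm (x k ^ k) \<le> (1 / 2) ^ k) sequentially"
    by eventually_elim (use assms(2) in \<open>auto intro: power_mono\<close>)
  show "summable (\<lambda>k. (1 / 2 :: real) ^ k)"
    by simp
qed

section \<open>q-Pochhammer symbols\<close>

lemma convergent_prod_qpoch:
  fixes x c :: "'a::{real_normed_field,banach}"
  assumes "norm c < 1"
  shows "convergent_prod (\<lambda>j. 1 - x * c ^ j)"
proof -
  have "summable (\<lambda>j. norm x * norm c ^ j)"
    using assms by (intro summable_mult summable_geometric) auto
  then have "summable (\<lambda>j. norm ((1 - x * c ^ j) - 1))"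
    by (simp add: norm_mult norm_power)
  then show ?thesis
    by (intro abs_convergent_prod_imp_convergent_prod summable_imp_abs_convergent_prod)
qed

lemma qpoch_inf_split:
  fixes x a :: real
  assumes "0 < a" "a < 1"
  shows "qpoch_inf x a = qpoch x a m * qpoch_inf (x * a ^ m) a"
proof -
  have "(\<lambda>j. 1 - x * a ^ j) has_prod ((\<Prod>j<m. 1 - x * a ^ j) * (\<Prod>j. 1 - x * a ^ (j + m)))"
    using assms by (intro has_prod_ignore_initial_segment' convergent_prod_qpoch) auto
  moreover have "(\<lambda>j. 1 - x * a ^ (j + m)) = (\<lambda>j. 1 - (x * a ^ m) * a ^ j)"
    by (simp add: power_add mult_ac)
  ultimately show ?thesis
    unfolding qpoch_inf_def qpoch_def by (metis has_prod_unique)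
qed

lemma qpoch_inf_step:
  fixes x a :: real
  assumes "0 < a" "a < 1"
  shows "qpoch_inf x a = (1 - x) * qpoch_inf (x * a) a"
  using qpoch_inf_split[OF assms, of x 1] by (simp add: qpoch_def)

lemma qpoch_inf_eq_0_iff:
  fixes x a :: real
  assumes "0 < a" "a < 1"
  shows "qpoch_inf x a = 0 \<longleftrightarrow> (\<exists>j. x * a ^ j = 1)"
proof
  assume "qpoch_inf x a = 0"
  moreover have "convergent_prod (\<lambda>j. 1 - x * a ^ j)"
    using assms by (intro convergent_prod_qpoch) auto
  ultimately show "\<exists>j. x * a ^ j = 1"
    unfolding qpoch_inf_def using prodinf_nonzero by fastforce
next
  assume "\<exists>j. x * a ^ j = 1"
  then obtain j where "x * a ^ j = 1" by blast
  then have "qpoch x a (Suc j) = 0"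
    unfolding qpoch_def by (intro prod_zero) auto
  then show "qpoch_inf x a = 0"
    using qpoch_inf_split[OF assms, of x "Suc j"] by simp
qed

lemma qpoch_inf_powr_eq_0_iff:
  fixes a y :: real
  assumes "0 < a" "a < 1"
  shows "qpoch_inf (a powr y) a = 0 \<longleftrightarrow> (\<exists>n. y = - real n)"
proof -
  have "a powr y * a ^ j = a powr (y + real j)" for j
    using assms by (simp add: powr_add powr_realpow)
  then have "a powr y * a ^ j = 1 \<longleftrightarrow> y = - real j" for j
    using assms by auto
  then show ?thesis
    using qpoch_inf_eq_0_iff[OF assms] by auto
qed

lemma qpoch_inf_self_nonzero:
  fixes a :: real
  assumes "0 < a" "a < 1"
  shows "qpoch_inf a a \<noteq> 0"
  using qpoch_inf_powr_eq_0_iff[OF assms, of 1] assms by auto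

lemma qpoch_Suc: "qpoch a q (Suc k) = qpoch a q k * (1 - a * q ^ k)"
  unfolding qpoch_def by simp

lemma qpoch_pos:
  fixes a :: real
  assumes "0 < a" "a < 1"
  shows "(1 - a) ^ k \<le> qpoch a a k" "0 < qpoch a a k"
proof -
  have "a * a ^ i \<le> a" for i
    using assms mult_left_le[of "a ^ i" a] by (simp add: power_le_one)
  then have "(\<Prod>i<k. 1 - a) \<le> (\<Prod>i<k. 1 - a * a ^ i)"
    using assms by (intro prod_mono) auto
  then show "(1 - a) ^ k \<le> qpoch a a k"
    unfolding qpoch_def by simp
  moreover have "0 < (1 - a) ^ k"
    using assms by simp
  ultimately show "0 < qpoch a a k"
    by linarith
qed

definition cqpoch_inf :: "complex \<Rightarrow> real \<Rightarrow> complex" where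
  "cqpoch_inf x a = (\<Prod>j. 1 - x * of_real a ^ j)"

lemma cqpoch_inf_of_real:
  fixes a t :: real
  assumes "0 < a" "a < 1"
  shows "cqpoch_inf (of_real t) a = of_real (qpoch_inf t a)"
proof -
  have "(\<lambda>j. 1 - t * a ^ j) has_prod qpoch_inf t a"
    unfolding qpoch_inf_def using assms
    by (intro convergent_prod_has_prod convergent_prod_qpoch) auto
  then have "(\<lambda>j. 1 - of_real t * of_real a ^ j) has_prod (of_real (qpoch_inf t a) :: complex)"
    by (subst (asm) has_prod_of_real_iff[symmetric]) simp
  then show ?thesis
    unfolding cqpoch_inf_def by (metis has_prod_unique)
qed

lemma uniform_limit_cqpoch_inf:
  fixes a :: real
  assumes "0 < a" "a < 1"
  shows "uniform_limit (cball 0 R) (\<lambda>N x. \<Prod>j<N. 1 - x * complex_of_real a ^ j)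
           (\<lambda>x. cqpoch_inf x a) sequentially"
proof -
  have "uniformly_convergent_on (cball 0 R)
          (\<lambda>N x. \<Sum>j<N. norm ((1 - x * complex_of_real a ^ j) - 1))"
  proof (rule Weierstrass_m_test'[where M = "\<lambda>j. R * a ^ j"])
    fix j and x :: complex
    assume "x \<in> cball 0 R"
    then show "norm (norm ((1 - x * complex_of_real a ^ j) - 1)) \<le> R * a ^ j"
      using assms by (simp add: norm_mult norm_power mult_right_mono)
  next
    show "summable (\<lambda>j. R * a ^ j)"
      using assms by (intro summable_mult summable_geometric) auto
  qed
  then have "uniformly_convergent_on (cball 0 R) (\<lambda>N x. \<Prod>j<N. 1 - x * complex_of_real a ^ j)"
    by (intro uniformly_convergent_on_prod') (auto intro!: continuous_intros)
  moreover have "lim (\<lambda>N. \<Prod>j<N. 1 - x * complex_of_real a ^ j) = cqpoch_inf x a" for x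
  proof -
    have "convergent_prod (\<lambda>j. 1 - x * complex_of_real a ^ j)"
      using assms by (intro convergent_prod_qpoch) auto
    then show ?thesis
      unfolding cqpoch_inf_def
      by (intro limI) (subst LIMSEQ_lessThan_iff_atMost, rule convergent_prod_LIMSEQ)
  qed
  ultimately show ?thesis
    by (simp add: uniformly_convergent_uniform_limit_iff)
qed

lemma holomorphic_cqpoch_inf:
  fixes a :: real
  assumes "0 < a" "a < 1"
  shows "(\<lambda>x. cqpoch_inf x a) holomorphic_on UNIV"
proof -
  have "(\<lambda>x. cqpoch_inf x a) field_differentiable at x" for x
  proof -
    have "continuous_on (cball 0 (norm x + 1)) (\<lambda>x. cqpoch_inf x a) \<and>
          (\<lambda>x. cqpoch_inf x a) holomorphic_on ball 0 (norm x + 1)"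
      by (rule holomorphic_uniform_limit[OF _ uniform_limit_cqpoch_inf[OF assms]])
         (auto intro!: always_eventually holomorphic_intros continuous_intros)
    then show ?thesis
      by (intro holomorphic_on_imp_differentiable_at[of _ "ball 0 (norm x + 1)"]) auto
  qed
  then show ?thesis
    by (simp add: holomorphic_on_def field_differentiable_at_within)
qed

lemma holomorphic_on_cqpoch_inf [holomorphic_intros]:
  fixes a :: real
  assumes "0 < a" "a < 1" "f holomorphic_on S"
  shows "(\<lambda>s. cqpoch_inf (f s) a) holomorphic_on S"
  using holomorphic_on_compose[OF assms(3)
          holomorphic_on_subset[OF holomorphic_cqpoch_inf[OF assms(1,2)]]]
  by (simp add: o_def)

lemma isCont_qpoch_inf:
  fixes a :: real
  assumes "0 < a" "a < 1"
  shows "isCont (\<lambda>t. qpoch_inf t a) t"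
proof -
  have "isCont (\<lambda>x. cqpoch_inf x a) (of_real t)"
    using holomorphic_on_imp_continuous_on[OF holomorphic_cqpoch_inf[OF assms]]
    by (simp add: continuous_on_eq_continuous_at)
  then have "isCont (\<lambda>t. cqpoch_inf (of_real t) a) t"
    by (rule isCont_o2[where f = complex_of_real, rotated]) (intro continuous_intros)
  then have "isCont (\<lambda>t. Re (cqpoch_inf (of_real t) a)) t"
    by (rule isCont_Re)
  then show ?thesis
    using cqpoch_inf_of_real[OF assms] by simp
qed

section \<open>The q-Gamma function\<close>

lemma inverse_qGamma:
  fixes a x :: real
  assumes "0 < a" "a < 1"
  shows "inverse (qGamma a x) = qpoch_inf (a powr x) a * (1 - a) powr (x - 1) / qpoch_inf a a"
proof -
  have "inverse ((1 - a) powr (1 - x)) = (1 - a) powr (x - 1)"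
    by (metis minus_diff_eq powr_minus)
  then show ?thesis
    unfolding qGamma_def by (simp add: divide_inverse inverse_mult_distrib mult_ac)
qed

lemma inverse_qGamma_recurrence:
  fixes a x :: real
  assumes "0 < a" "a < 1"
  shows "inverse (qGamma a x) = (1 - a powr x) / (1 - a) * inverse (qGamma a (x + 1))"
proof -
  have "qpoch_inf (a powr x) a = (1 - a powr x) * qpoch_inf (a powr (x + 1)) a"
    using qpoch_inf_step[OF assms, of "a powr x"] assms by (simp add: powr_add)
  moreover have "(1 - a) powr (x - 1) = (1 - a) powr (x + 1 - 1) / (1 - a)"
    using assms by (simp add: powr_diff)
  ultimately show ?thesis
    unfolding inverse_qGamma[OF assms] by simp
qed

lemma qGamma_of_nat:
  fixes a :: real
  assumes "0 < a" "a < 1"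
  shows "qGamma a (real k + 1) = qpoch a a k * (1 - a) powr (- real k)"
proof -
  have "qpoch_inf a a = qpoch a a k * qpoch_inf (a powr (real k + 1)) a"
    using qpoch_inf_split[OF assms, of a k] assms by (simp add: powr_add powr_realpow mult.commute)
  then show ?thesis
    unfolding qGamma_def using qpoch_inf_self_nonzero[OF assms] by simp
qed

lemma qGamma_1:
  fixes a :: real
  assumes "0 < a" "a < 1"
  shows "qGamma a 1 = 1"
  using qGamma_of_nat[OF assms, of 0] assms by (simp add: qpoch_def)

lemma qGamma_nonpos_int:
  fixes a :: real
  assumes "0 < a" "a < 1"
  shows "qGamma a (- real n) = 0"
  unfolding qGamma_def using qpoch_inf_powr_eq_0_iff[OF assms, of "- real n"] by auto

lemma isCont_qGamma:
  fixes a x :: real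
  assumes "0 < a" "a < 1" "qpoch_inf (a powr x) a \<noteq> 0"
  shows "isCont (qGamma a) x"
proof -
  have "isCont (\<lambda>x. qpoch_inf (a powr x) a) x"
    using assms by (intro isCont_o2[OF _ isCont_qpoch_inf]) (auto intro!: continuous_intros)
  then show ?thesis
    unfolding qGamma_def [abs_def] using assms by (intro continuous_intros) auto
qed

definition rqGamma :: "real \<Rightarrow> complex \<Rightarrow> complex" where
  "rqGamma a s =
     cqpoch_inf (of_real a powr s) a * of_real (1 - a) powr (s - 1) / of_real (qpoch_inf a a)"

lemma rqGamma_of_real:
  fixes a x :: real
  assumes "0 < a" "a < 1"
  shows "rqGamma a (of_real x) = of_real (inverse (qGamma a x))"
proof -
  have "of_real x - 1 = complex_of_real (x - 1)"
    by simp
  then have "of_real a powr of_real x = complex_of_real (a powr x)"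
    "of_real (1 - a) powr (of_real x - 1) = complex_of_real ((1 - a) powr (x - 1))"
    using assms by (simp_all only: powr_of_real)
  then show ?thesis
    unfolding rqGamma_def inverse_qGamma[OF assms] by (simp add: cqpoch_inf_of_real[OF assms])
qed

lemma holomorphic_on_rqGamma [holomorphic_intros]:
  fixes a :: real
  assumes "0 < a" "a < 1" "f holomorphic_on S"
  shows "(\<lambda>s. rqGamma a (f s)) holomorphic_on S"
  unfolding rqGamma_def using assms qpoch_inf_self_nonzero[OF assms(1,2)]
  by (intro holomorphic_intros) auto

lemma rqGamma_bounded:
  fixes a c :: real
  assumes "0 < a" "a < 1"
  obtains B where "\<And>s. c \<le> Re s \<Longrightarrow> norm (rqGamma a s) \<le> B"
proof -
  have "compact ((\<lambda>x. cqpoch_inf x a) ` cball 0 (a powr c))"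
    using holomorphic_on_imp_continuous_on[OF holomorphic_cqpoch_inf[OF assms]]
    by (intro compact_continuous_image) (auto intro: continuous_on_subset)
  then obtain B where B: "\<And>x. norm x \<le> a powr c \<Longrightarrow> norm (cqpoch_inf x a) \<le> B"
    by (fastforce dest: compact_imp_bounded simp: bounded_iff)
  have "0 \<le> B"
    using B[of 0] norm_ge_zero[of "cqpoch_inf 0 a"] by (auto simp del: norm_ge_zero)
  have "norm (rqGamma a s) \<le> B * (1 - a) powr (c - 1) / \<bar>qpoch_inf a a\<bar>" if "c \<le> Re s" for s
  proof -
    have "norm (of_real a powr s) \<le> a powr c"
      using assms that by (simp add: norm_powr_real_powr powr_mono')
    then have "norm (cqpoch_inf (of_real a powr s) a) \<le> B"
      by (rule B)
    moreover have "norm (of_real (1 - a) powr (s - 1)) \<le> (1 - a) powr (c - 1)"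
      using assms that by (simp add: norm_powr_real_powr powr_mono')
    ultimately show ?thesis
      unfolding rqGamma_def norm_divide norm_mult norm_of_real
      using \<open>0 \<le> B\<close> by (intro divide_right_mono mult_mono) auto
  qed
  then show ?thesis
    by (rule that)
qed

section \<open>The series I3 as a function of its order\<close>

definition I3_coeff :: "real \<Rightarrow> real \<Rightarrow> nat \<Rightarrow> real" where
  "I3_coeff q \<mu> k = q powr (real k * (\<mu> + real k)) * (1 - q\<^sup>2) ^ k
     / (qpoch (q\<^sup>2) (q\<^sup>2) k * qGamma (q\<^sup>2) (\<mu> + real k + 1))"

lemma I3_eq_suminf:
  "I3 q \<mu> z = (\<Sum>k. of_real (I3_coeff q \<mu> k) * (z / 2) powr of_real (\<mu> + 2 * real k))"
  unfolding I3_def I3_coeff_def ..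

lemma I3_coeff_eq_inverse_qGamma:
  "I3_coeff q \<mu> k = q powr (real k * (\<mu> + real k)) * (1 - q\<^sup>2) ^ k / qpoch (q\<^sup>2) (q\<^sup>2) k
     * inverse (qGamma (q\<^sup>2) (\<mu> + real k + 1))"
  unfolding I3_coeff_def by (simp add: divide_inverse mult_ac)

lemma I3_coeff_raise:
  fixes q \<mu> :: real
  assumes "0 < q" "q < 1"
  shows "I3_coeff q \<mu> (Suc k) * (1 - q ^ (2 * Suc k)) / (1 - q\<^sup>2)
       = q powr (\<mu> + real k + 1) * I3_coeff q (\<mu> + 1) k"
proof -
  have a: "0 < q\<^sup>2" "q\<^sup>2 < 1"
    using assms by (auto simp: power_less_one_iff)
  have "q\<^sup>2 * (q\<^sup>2) ^ k = q ^ (2 * Suc k)"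
    by (simp add: power_mult power2_eq_square)
  then have qpoch: "qpoch (q\<^sup>2) (q\<^sup>2) (Suc k) = qpoch (q\<^sup>2) (q\<^sup>2) k * (1 - q ^ (2 * Suc k))"
    by (simp add: qpoch_Suc)
  have "real (Suc k) * (\<mu> + real (Suc k)) = real k * (\<mu> + 1 + real k) + (\<mu> + real k + 1)"
    by (simp add: algebra_simps)
  then have pow: "q powr (real (Suc k) * (\<mu> + real (Suc k)))
      = q powr (real k * (\<mu> + 1 + real k)) * q powr (\<mu> + real k + 1)"
    by (simp add: powr_add)
  have arg: "\<mu> + real (Suc k) + 1 = \<mu> + 1 + real k + 1"
    by simp
  have "q ^ (2 * Suc k) < 1"
    using assms by (simp only: power_less_one_iff) simp
  have "I3_coeff q \<mu> (Suc k)
      = q powr (\<mu> + real k + 1) * I3_coeff q (\<mu> + 1) k * (1 - q\<^sup>2) / (1 - q ^ (2 * Suc k))"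
    unfolding I3_coeff_eq_inverse_qGamma qpoch pow arg
    by (simp only: power_Suc divide_inverse inverse_mult_distrib mult_ac)
  moreover have "1 - q ^ (2 * Suc k) \<noteq> 0" "1 - q\<^sup>2 \<noteq> 0"
    using a \<open>q ^ (2 * Suc k) < 1\<close> by auto
  ultimately show ?thesis
    by simp
qed

lemma I3_coeff_lower:
  fixes q \<nu> :: real
  assumes "0 < q" "q < 1"
  shows "I3_coeff q \<nu> k * (1 - q powr (2 * \<nu> + 2 * real k)) / (1 - q\<^sup>2)
       = q ^ k * I3_coeff q (\<nu> - 1) k"
proof -
  have a: "0 < q\<^sup>2" "q\<^sup>2 < 1"
    using assms by (auto simp: power_less_one_iff)
  have "(q\<^sup>2) powr (\<nu> + real k) = q powr (2 * \<nu> + 2 * real k)"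
    using powr_power2_base[OF assms(1), of "\<nu> + real k"] by (simp add: distrib_left)
  then have rec: "inverse (qGamma (q\<^sup>2) (\<nu> - 1 + real k + 1))
      = (1 - q powr (2 * \<nu> + 2 * real k)) / (1 - q\<^sup>2) * inverse (qGamma (q\<^sup>2) (\<nu> + real k + 1))"
    using inverse_qGamma_recurrence[OF a, of "\<nu> + real k"] by (simp add: add.commute)
  have "real k * (\<nu> + real k) = real k * (\<nu> - 1 + real k) + real k"
    by (simp add: algebra_simps)
  then have pow: "q powr (real k * (\<nu> + real k)) = q powr (real k * (\<nu> - 1 + real k)) * q ^ k"
    using assms by (simp add: powr_add powr_realpow)
  show ?thesis
    unfolding I3_coeff_eq_inverse_qGamma rec pow by (simp only: divide_inverse mult_ac)
qed

lemma I3_coeff_neg_nat_eq_0: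
  fixes q :: real
  assumes "0 < q" "q < 1" "k < m"
  shows "I3_coeff q (- real m) k = 0"
proof -
  have "- real m + real k + 1 = - real (m - k - 1)"
    using assms(3) by (simp add: of_nat_diff)
  then have "qGamma (q\<^sup>2) (- real m + real k + 1) = 0"
    using qGamma_nonpos_int[of "q\<^sup>2" "m - k - 1"] assms by (simp only: power_less_one_iff) auto
  then show ?thesis
    unfolding I3_coeff_def by simp
qed

lemma I3_coeff_neg_nat_shift:
  fixes q :: real
  assumes "0 < q" "q < 1"
  shows "I3_coeff q (- real m) (k + m) = I3_coeff q (real m) k"
proof -
  have a: "0 < q\<^sup>2" "q\<^sup>2 < 1"
    using assms by (auto simp: power_less_one_iff)
  have pw: "(1 - q\<^sup>2) powr (- real n) = inverse ((1 - q\<^sup>2) ^ n)" for n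
    using a by (simp add: powr_minus powr_realpow)
  have g1: "qGamma (q\<^sup>2) (- real m + real (k + m) + 1)
          = qpoch (q\<^sup>2) (q\<^sup>2) k * inverse ((1 - q\<^sup>2) ^ k)"
    using qGamma_of_nat[OF a, of k] unfolding pw by simp
  have g2: "qGamma (q\<^sup>2) (real m + real k + 1)
          = qpoch (q\<^sup>2) (q\<^sup>2) (k + m) * inverse ((1 - q\<^sup>2) ^ (k + m))"
    using qGamma_of_nat[OF a, of "k + m"] unfolding pw by (simp add: ac_simps)
  have e: "real (k + m) * (- real m + real (k + m)) = real k * (real m + real k)"
    by (simp add: algebra_simps)
  show ?thesis
    unfolding I3_coeff_def g1 g2 e
    by (simp only: divide_inverse inverse_mult_distrib inverse_inverse_eq mult_ac)
qed

definition I3_term :: "real \<Rightarrow> complex \<Rightarrow> nat \<Rightarrow> complex \<Rightarrow> complex" where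
  "I3_term q w k s = of_real ((1 - q\<^sup>2) ^ k / qpoch (q\<^sup>2) (q\<^sup>2) k)
     * of_real q powr (of_nat k * (s + of_nat k)) * rqGamma (q\<^sup>2) (s + of_nat k + 1)
     * (w / 2) powr (s + 2 * of_nat k)"

definition I3_ext :: "real \<Rightarrow> complex \<Rightarrow> complex \<Rightarrow> complex" where
  "I3_ext q w s = (\<Sum>k. I3_term q w k s)"

lemma I3_term_of_real:
  fixes q \<mu> :: real
  assumes "0 < q" "q < 1"
  shows "I3_term q w k (of_real \<mu>)
       = of_real (I3_coeff q \<mu> k) * (w / 2) powr of_real (\<mu> + 2 * real k)"
proof -
  have a: "0 < q\<^sup>2" "q\<^sup>2 < 1"
    using assms by (auto simp: power_less_one_iff)
  have "of_real q powr (of_nat k * (of_real \<mu> + of_nat k))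
      = complex_of_real (q powr (real k * (\<mu> + real k)))"
    using assms powr_of_real[of q "real k * (\<mu> + real k)"] by simp
  moreover have "rqGamma (q\<^sup>2) (of_real \<mu> + of_nat k + 1)
      = of_real (inverse (qGamma (q\<^sup>2) (\<mu> + real k + 1)))"
    using rqGamma_of_real[OF a, of "\<mu> + real k + 1"] by simp
  moreover have "of_real \<mu> + 2 * of_nat k = complex_of_real (\<mu> + 2 * real k)"
    by simp
  ultimately show ?thesis
    unfolding I3_term_def I3_coeff_eq_inverse_qGamma by (simp only:) (simp add: mult_ac)
qed

lemma norm_I3_term_le:
  fixes q \<sigma> B :: real
  assumes "0 < q" "q < 1" "w \<noteq> 0" "\<sigma> \<le> Re s"
    and B: "\<And>t. \<sigma> + 1 \<le> Re t \<Longrightarrow> norm (rqGamma (q\<^sup>2) t) \<le> B"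
  shows "norm (I3_term q w k s)
       \<le> B * norm ((w / 2) powr s) * (q powr (\<sigma> + real k) * norm (w / 2) ^ 2) ^ k"
proof -
  have a: "0 < q\<^sup>2" "q\<^sup>2 < 1"
    using assms by (auto simp: power_less_one_iff)
  have "\<bar>(1 - q\<^sup>2) ^ k / qpoch (q\<^sup>2) (q\<^sup>2) k\<bar> \<le> 1"
    using qpoch_pos[OF a, of k] a by simp
  then have n1: "norm (of_real ((1 - q\<^sup>2) ^ k / qpoch (q\<^sup>2) (q\<^sup>2) k) :: complex) \<le> 1"
    by (simp only: norm_of_real)
  have "q powr (real k * (Re s + real k)) \<le> q powr (real k * (\<sigma> + real k))"
    using assms by (intro powr_mono') (auto intro: mult_left_mono)
  then have n2: "norm (of_real q powr (of_nat k * (s + of_nat k))) \<le> (q powr (\<sigma> + real k)) ^ k"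
    using assms by (simp add: norm_powr_real_powr powr_power)
  have n3: "norm (rqGamma (q\<^sup>2) (s + of_nat k + 1)) \<le> B"
    using assms by (intro B) simp
  then have "0 \<le> B"
    using norm_ge_zero order_trans by blast
  have "(w / 2) powr (2 * of_nat k) = (w / 2) ^ (2 * k)"
    using assms powr_nat'[of "w / 2" "2 * k"] by simp
  then have n4: "norm ((w / 2) powr (s + 2 * of_nat k))
      = norm ((w / 2) powr s) * (norm (w / 2) ^ 2) ^ k"
    by (simp add: powr_add norm_mult norm_power flip: power_mult)
  have "norm (I3_term q w k s)
      \<le> 1 * (q powr (\<sigma> + real k)) ^ k * B * (norm ((w / 2) powr s) * (norm (w / 2) ^ 2) ^ k)"
    unfolding I3_term_def norm_mult n4[symmetric] using n1 n2 n3 \<open>0 \<le> B\<close> by (intro mult_mono) auto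
  also have "\<dots> = B * norm ((w / 2) powr s) * (q powr (\<sigma> + real k) * norm (w / 2) ^ 2) ^ k"
    by (simp add: power_mult_distrib)
  finally show ?thesis .
qed

lemma I3_term_summable_bound:
  fixes q :: real and s\<^sub>0 :: complex
  assumes "0 < q" "q < 1" "w \<noteq> 0"
  obtains M where "summable M" "\<And>k s. s \<in> cball s\<^sub>0 1 \<Longrightarrow> norm (I3_term q w k s) \<le> M k"
proof -
  define \<sigma> where "\<sigma> = Re s\<^sub>0 - 1"
  have a: "0 < q\<^sup>2" "q\<^sup>2 < 1"
    using assms by (auto simp: power_less_one_iff)
  obtain B where B: "\<And>t. \<sigma> + 1 \<le> Re t \<Longrightarrow> norm (rqGamma (q\<^sup>2) t) \<le> B"
    using rqGamma_bounded[OF a] by blast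
  have "compact ((\<lambda>s. (w / 2) powr s) ` cball s\<^sub>0 1)"
    by (intro compact_continuous_image holomorphic_on_imp_continuous_on holomorphic_intros) auto
  then obtain C where C: "\<And>s. s \<in> cball s\<^sub>0 1 \<Longrightarrow> norm ((w / 2) powr s) \<le> C"
    by (fastforce dest: compact_imp_bounded simp: bounded_iff)
  define x where "x k = q powr (\<sigma> + real k) * norm (w / 2) ^ 2" for k
  have "x \<longlonglongrightarrow> q powr \<sigma> * 0 * norm (w / 2) ^ 2"
    unfolding x_def using assms
    by (simp only: powr_add powr_realpow) (intro tendsto_intros LIMSEQ_power_zero, auto)
  moreover have "0 \<le> x k" for k
    by (simp add: x_def)
  ultimately have "summable (\<lambda>k. B * C * x k ^ k)"
    by (intro summable_mult summable_power_of_null) auto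
  moreover have "norm (I3_term q w k s) \<le> B * C * x k ^ k" if "s \<in> cball s\<^sub>0 1" for k s
  proof -
    have "\<bar>Re s - Re s\<^sub>0\<bar> \<le> 1"
      using that abs_Re_le_cmod[of "s - s\<^sub>0"] by (simp add: dist_norm norm_minus_commute)
    then have "\<sigma> \<le> Re s"
      unfolding \<sigma>_def by linarith
    then have "norm (I3_term q w k s) \<le> B * norm ((w / 2) powr s) * x k ^ k"
      unfolding x_def using assms B by (intro norm_I3_term_le) auto
    also have "\<dots> \<le> B * C * x k ^ k"
      using B[of "of_real (\<sigma> + 1)"] C[OF that] norm_ge_zero[of "rqGamma (q\<^sup>2) (of_real (\<sigma> + 1))"]
      by (intro mult_right_mono mult_left_mono) (auto simp: x_def simp del: norm_ge_zero)
    finally show ?thesis .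
  qed
  ultimately show ?thesis
    using that by blast
qed

lemma holomorphic_I3_ext:
  fixes q :: real
  assumes "0 < q" "q < 1" "w \<noteq> 0"
  shows "I3_ext q w holomorphic_on UNIV"
proof -
  have a: "0 < q\<^sup>2" "q\<^sup>2 < 1"
    using assms by (auto simp: power_less_one_iff)
  have "I3_ext q w field_differentiable at s\<^sub>0" for s\<^sub>0
  proof -
    obtain M where "summable M" "\<And>k s. s \<in> cball s\<^sub>0 1 \<Longrightarrow> norm (I3_term q w k s) \<le> M k"
      using I3_term_summable_bound[OF assms] by blast
    then have "uniform_limit (cball s\<^sub>0 1) (\<lambda>n s. \<Sum>k<n. I3_term q w k s) (I3_ext q w) sequentially"
      unfolding I3_ext_def by (intro Weierstrass_m_test)
    then have "continuous_on (cball s\<^sub>0 1) (I3_ext q w) \<and> I3_ext q w holomorphic_on ball s\<^sub>0 1"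
      by (rule holomorphic_uniform_limit[rotated])
         (auto intro!: always_eventually holomorphic_intros holomorphic_on_imp_continuous_on a
               simp: I3_term_def)
    then show ?thesis
      by (intro holomorphic_on_imp_differentiable_at[of _ "ball s\<^sub>0 1"]) auto
  qed
  then show ?thesis
    by (simp add: holomorphic_on_def field_differentiable_at_within)
qed

lemma I3_eq_I3_ext:
  fixes q \<mu> :: real
  assumes "0 < q" "q < 1"
  shows "I3 q \<mu> w = I3_ext q w (of_real \<mu>)"
  unfolding I3_eq_suminf I3_ext_def I3_term_of_real[OF assms] ..

lemma I3_sums:
  fixes q \<mu> :: real
  assumes "0 < q" "q < 1" "w \<noteq> 0"
  shows "(\<lambda>k. of_real (I3_coeff q \<mu> k) * (w / 2) powr of_real (\<mu> + 2 * real k)) sums I3 q \<mu> w"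
proof -
  obtain M where "summable M" "\<And>k s. s \<in> cball (of_real \<mu>) 1 \<Longrightarrow> norm (I3_term q w k s) \<le> M k"
    using I3_term_summable_bound[OF assms] by blast
  then have "summable (\<lambda>k. I3_term q w k (of_real \<mu>))"
    by (intro summable_comparison_test[OF _ \<open>summable M\<close>]) auto
  then show ?thesis
    unfolding I3_eq_suminf I3_term_of_real[OF assms(1,2)] by (rule summable_sums)
qed

lemma I3_scaled_sums:
  fixes q \<mu> a r :: real and w :: complex
  assumes "0 < q" "q < 1" "0 < r" "w \<noteq> 0"
  shows "(\<lambda>k. of_real (I3_coeff q \<mu> k * (r / 2) powr (\<mu> + 2 * real k))
             * w powr of_real (a + (\<mu> + 2 * real k)))
           sums (w powr of_real a * I3 q \<mu> (of_real r * w))"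
proof -
  have summand: "w powr of_real a * (of_real (I3_coeff q \<mu> k) * (of_real r * w / 2) powr of_real t)
      = of_real (I3_coeff q \<mu> k * (r / 2) powr t) * w powr of_real (a + t)" for k t
  proof -
    have "of_real r * w / 2 = of_real (r / 2) * w"
      by simp
    then have "(of_real r * w / 2) powr of_real t = of_real ((r / 2) powr t) * w powr of_real t"
      using assms powr_of_real_mult[of "r / 2" w t] by simp
    then show ?thesis
      by (simp only: of_real_mult of_real_add powr_add mult_ac)
  qed
  have "(\<lambda>k. w powr of_real a
          * (of_real (I3_coeff q \<mu> k) * (of_real r * w / 2) powr of_real (\<mu> + 2 * real k)))
      sums (w powr of_real a * I3 q \<mu> (of_real r * w))"
    using assms by (intro sums_mult I3_sums) auto
  then show ?thesis
    unfolding summand .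
qed

lemma I3_neg_nat:
  fixes q :: real
  assumes "0 < q" "q < 1" "w \<noteq> 0"
  shows "I3 q (- real m) w = I3 q (real m) w"
proof -
  let ?t = "\<lambda>\<mu> k. of_real (I3_coeff q \<mu> k) * (w / 2) powr of_real (\<mu> + 2 * real k)"
  have "(\<Sum>k<m. ?t (- real m) k) = 0"
    using I3_coeff_neg_nat_eq_0[OF assms(1,2)] by simp
  then have "(\<lambda>k. ?t (- real m) (k + m)) sums I3 q (- real m) w"
    using sums_iff_shift[of "?t (- real m)" m] I3_sums[OF assms, of "- real m"] by simp
  moreover have "(\<lambda>k. ?t (- real m) (k + m)) = ?t (real m)"
  proof
    fix k
    have "- real m + 2 * real (k + m) = real m + 2 * real k"
      by simp
    then show "?t (- real m) (k + m) = ?t (real m) k"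
      by (simp only: I3_coeff_neg_nat_shift[OF assms(1,2)])
  qed
  ultimately show ?thesis
    using I3_sums[OF assms, of "real m"] sums_unique2 by metis
qed

lemma I3_neg_int:
  fixes q n :: real
  assumes "0 < q" "q < 1" "w \<noteq> 0" "n \<in> \<int>"
  shows "I3 q (- n) w = I3 q n w"
proof -
  obtain i where i: "n = of_int i"
    using assms(4) by (auto elim: Ints_cases)
  show ?thesis
  proof (cases "0 \<le> i")
    case True
    then have "n = real (nat i)"
      using i by simp
    then show ?thesis
      using I3_neg_nat[OF assms(1-3)] by simp
  next
    case False
    then have "n = - real (nat (- i))"
      using i by simp
    then show ?thesis
      using I3_neg_nat[OF assms(1-3), of "nat (- i)"] by simp
  qed
qed

lemma I3_reflection_difference_quotient:
  fixes q n :: real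
  assumes "0 < q" "q < 1" "w \<noteq> 0" "n \<in> \<int>"
  obtains D where "((\<lambda>\<mu>. (I3 q (- \<mu>) w - I3 q \<mu> w) / of_real (\<mu> - n)) \<longlongrightarrow> D) (at n)"
proof -
  define G where "G s = I3_ext q w (- s) - I3_ext q w s" for s
  have "(\<lambda>s. - s) holomorphic_on UNIV"
    by (intro holomorphic_intros)
  then have "(\<lambda>s. I3_ext q w (- s)) holomorphic_on UNIV"
    using holomorphic_on_compose[of "\<lambda>s. - s" UNIV "I3_ext q w"] holomorphic_I3_ext[OF assms(1-3)]
    by (simp add: o_def)
  then have "G holomorphic_on UNIV"
    unfolding G_def using holomorphic_I3_ext[OF assms(1-3)] by (intro holomorphic_intros)
  then obtain D where "(G has_field_derivative D) (at (of_real n))"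
    using holomorphic_on_imp_differentiable_at[of G UNIV "of_real n"]
    by (auto simp: field_differentiable_def)
  then have "((\<lambda>s. (G s - G (of_real n)) / (s - of_real n)) \<longlongrightarrow> D) (at (of_real n))"
    by (simp add: has_field_derivative_iff)
  moreover have "filterlim complex_of_real (at (of_real n)) (at n)"
    by (intro filterlim_atI tendsto_intros) (auto simp: eventually_at_filter)
  ultimately have "((\<lambda>\<mu>. (G (of_real \<mu>) - G (of_real n)) / (of_real \<mu> - of_real n)) \<longlongrightarrow> D) (at n)"
    by (rule filterlim_compose)
  moreover have "G (of_real \<mu>) = I3 q (- \<mu>) w - I3 q \<mu> w" for \<mu>
    unfolding G_def I3_eq_I3_ext[OF assms(1,2)] by simp
  ultimately show ?thesis
    using that I3_neg_int[OF assms] by simp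
qed

section \<open>q-derivatives of power series\<close>

lemma qderiv_sums:
  assumes "(\<lambda>k. f k z) sums F z" "(\<lambda>k. f k (of_real q * z)) sums F (of_real q * z)"
  shows "(\<lambda>k. qderiv q (f k) z) sums qderiv q F z"
  using assms unfolding qderiv_def by (intro sums_divide sums_diff)

lemma qderiv_scale_diff: "qderiv q (\<lambda>w. c * (f w - g w)) z = c * (qderiv q f z - qderiv q g z)"
  unfolding qderiv_def by (simp add: divide_inverse algebra_simps)

lemma qderiv_scaled_powr:
  fixes q c s :: real and z :: complex
  assumes "0 < q" "q < 1" "z \<noteq> 0"
  shows "2 / ((1 + of_real q) * z) * qderiv q (\<lambda>w. of_real c * w powr of_real s) z
       = of_real (2 * c * (1 - q powr s) / (1 - q\<^sup>2)) * z powr of_real (s - 2)"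
proof -
  let ?Q = "complex_of_real q" and ?P = "complex_of_real (q powr s)" and ?Z = "z powr of_real (s - 2)"
  have "1 + ?Q = of_real (1 + q)" "1 - ?Q = of_real (1 - q)"
    by simp_all
  then have nz: "1 + ?Q \<noteq> 0" "1 - ?Q \<noteq> 0"
    using assms by (simp_all only: of_real_eq_0_iff)
  have "z powr of_real s = ?Z * z\<^sup>2"
    using assms powr_add[of z "of_real (s - 2)" 2] by simp
  then have qd: "qderiv q (\<lambda>w. of_real c * w powr of_real s) z
      = of_real c * (1 - ?P) * (?Z * z\<^sup>2) / ((1 - ?Q) * z)"
    unfolding qderiv_def powr_of_real_mult[OF less_imp_le[OF assms(1)]] by (simp add: algebra_simps)
  have "2 / ((1 + ?Q) * z) * qderiv q (\<lambda>w. of_real c * w powr of_real s) z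
      = 2 * (of_real c * (1 - ?P)) / ((1 + ?Q) * (1 - ?Q)) * ?Z"
  proof -
    have "2 / (A * z) * (X * (Y * z\<^sup>2) / (B * z)) = 2 * X / (A * B) * Y"
      if "A \<noteq> 0" "B \<noteq> 0" for A B X Y :: complex
      using that assms(3) by (simp add: field_simps power2_eq_square)
    then show ?thesis
      unfolding qd using nz by blast
  qed
  also have "(1 + ?Q) * (1 - ?Q) = of_real (1 - q\<^sup>2)"
    by (simp add: algebra_simps power2_eq_square)
  finally show ?thesis
    by simp
qed

lemma qderiv_powr_series:
  fixes q :: real and c s :: "nat \<Rightarrow> real" and z :: complex
  assumes "0 < q" "q < 1" "z \<noteq> 0"
    and "(\<lambda>k. of_real (c k) * z powr of_real (s k)) sums F z"
    and "(\<lambda>k. of_real (c k) * (of_real q * z) powr of_real (s k)) sums F (of_real q * z)"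
  shows "(\<lambda>k. of_real (2 * c k * (1 - q powr s k) / (1 - q\<^sup>2)) * z powr of_real (s k - 2))
           sums (2 / ((1 + of_real q) * z) * qderiv q F z)"
proof -
  have "(\<lambda>k. qderiv q (\<lambda>w. of_real (c k) * w powr of_real (s k)) z) sums qderiv q F z"
    using assms(4,5) by (rule qderiv_sums)
  then have "(\<lambda>k. 2 / ((1 + of_real q) * z) * qderiv q (\<lambda>w. of_real (c k) * w powr of_real (s k)) z)
      sums (2 / ((1 + of_real q) * z) * qderiv q F z)"
    by (rule sums_mult)
  then show ?thesis
    unfolding qderiv_scaled_powr[OF assms(1-3)] .
qed

lemma tendsto_qderiv_powr_mult:
  fixes q \<nu> :: real and z :: complex
  assumes "0 < q" "q < 1" "z \<noteq> 0"
    and "((\<lambda>\<mu>. F \<mu> z) \<longlongrightarrow> G z) (at \<nu>)" "((\<lambda>\<mu>. F \<mu> (of_real q * z)) \<longlongrightarrow> G (of_real q * z)) (at \<nu>)"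
  shows "((\<lambda>\<mu>. qderiv q (\<lambda>w. w powr of_real \<mu> * F \<mu> w) z)
           \<longlongrightarrow> qderiv q (\<lambda>w. w powr of_real \<nu> * G w) z) (at \<nu>)"
proof -
  have "(1 - of_real q) * z \<noteq> 0"
    using assms by (simp add: of_real_eq_1_iff)
  then show ?thesis
    unfolding qderiv_def using assms
    by (intro tendsto_intros tendsto_powr_of_real_exponent tendsto_ident_at) auto
qed

lemma I3_qderiv_same_order:
  fixes q \<nu> :: real and z :: complex
  assumes q: "0 < q" "q < 1" and z: "z \<noteq> 0"
  shows "2 / ((1 + of_real q) * z) * qderiv q (\<lambda>w. w powr of_real \<nu> * I3 q \<nu> w) z
       = of_real (q powr (- (\<nu> - 1) / 2))
         * (z powr of_real (\<nu> - 1) * I3 q (\<nu> - 1) (of_real (q powr (1 / 2)) * z))"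
proof -
  define c where "c k = I3_coeff q \<nu> k * (1 / 2) powr (\<nu> + 2 * real k)" for k
  define s where "s k = \<nu> + (\<nu> + 2 * real k)" for k
  have "(\<lambda>k. of_real (c k) * w powr of_real (s k)) sums (w powr of_real \<nu> * I3 q \<nu> w)"
    if "w \<noteq> 0" for w
    using I3_scaled_sums[OF q _ that, of 1 \<nu> \<nu>] unfolding c_def s_def by simp
  then have lhs: "(\<lambda>k. of_real (2 * c k * (1 - q powr s k) / (1 - q\<^sup>2)) * z powr of_real (s k - 2))
      sums (2 / ((1 + of_real q) * z) * qderiv q (\<lambda>w. w powr of_real \<nu> * I3 q \<nu> w) z)"
    using q z by (intro qderiv_powr_series) auto
  have rhs: "(\<lambda>k. of_real (q powr (- (\<nu> - 1) / 2)) * (of_real (I3_coeff q (\<nu> - 1) k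
        * (q powr (1 / 2) / 2) powr (\<nu> - 1 + 2 * real k)) * z powr of_real (\<nu> - 1 + (\<nu> - 1 + 2 * real k))))
      sums (of_real (q powr (- (\<nu> - 1) / 2))
            * (z powr of_real (\<nu> - 1) * I3 q (\<nu> - 1) (of_real (q powr (1 / 2)) * z)))"
    using q z by (intro sums_mult I3_scaled_sums) auto
  have coeff: "2 * c k * (1 - q powr s k) / (1 - q\<^sup>2)
      = q powr (- (\<nu> - 1) / 2) * (I3_coeff q (\<nu> - 1) k * (q powr (1 / 2) / 2) powr (\<nu> - 1 + 2 * real k))" for k
  proof -
    have "2 * c k * (1 - q powr s k) / (1 - q\<^sup>2)
        = 2 * (1 / 2) powr (\<nu> + 2 * real k) * (I3_coeff q \<nu> k * (1 - q powr (2 * \<nu> + 2 * real k)) / (1 - q\<^sup>2))"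
      unfolding c_def s_def by (simp add: algebra_simps)
    also have "\<dots> = (1 / 2) powr (\<nu> - 1 + 2 * real k) * q ^ k * I3_coeff q (\<nu> - 1) k"
      unfolding I3_coeff_lower[OF q] half_powr_pred by (simp add: algebra_simps)
    also have "\<dots> = I3_coeff q (\<nu> - 1) k
        * (q powr ((\<nu> - 1 + 2 * real k - \<nu> + 1) / 2) * (1 / 2) powr (\<nu> - 1 + 2 * real k))"
      using q by (simp add: powr_realpow)
    also have "\<dots> = q powr (- (\<nu> - 1) / 2)
        * (I3_coeff q (\<nu> - 1) k * (q powr (1 / 2) / 2) powr (\<nu> - 1 + 2 * real k))"
      unfolding sqrt_half_powr[OF q(1), symmetric] by (simp only: mult_ac)
    finally show ?thesis .
  qed
  have exponent: "s k - 2 = \<nu> - 1 + (\<nu> - 1 + 2 * real k)" for k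
    unfolding s_def by simp
  show ?thesis
    using lhs[unfolded coeff exponent] rhs unfolding of_real_mult mult.assoc by (rule sums_unique2)
qed

lemma I3_qderiv_neg_order:
  fixes q \<nu> :: real and z :: complex
  assumes q: "0 < q" "q < 1" and z: "z \<noteq> 0"
  shows "2 / ((1 + of_real q) * z) * qderiv q (\<lambda>w. w powr of_real \<nu> * I3 q (- \<nu>) w) z
       = of_real (q powr (- (\<nu> - 1) / 2))
         * (z powr of_real (\<nu> - 1) * I3 q (1 - \<nu>) (of_real (q powr (1 / 2)) * z))"
proof -
  define c where "c k = I3_coeff q (- \<nu>) k * (1 / 2) powr (- \<nu> + 2 * real k)" for k
  define s where "s k = \<nu> + (- \<nu> + 2 * real k)" for k
  have "(\<lambda>k. of_real (c k) * w powr of_real (s k)) sums (w powr of_real \<nu> * I3 q (- \<nu>) w)"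
    if "w \<noteq> 0" for w
    using I3_scaled_sums[OF q _ that, of 1 "- \<nu>" \<nu>] unfolding c_def s_def by simp
  then have "(\<lambda>k. of_real (2 * c k * (1 - q powr s k) / (1 - q\<^sup>2)) * z powr of_real (s k - 2))
      sums (2 / ((1 + of_real q) * z) * qderiv q (\<lambda>w. w powr of_real \<nu> * I3 q (- \<nu>) w) z)"
    using q z by (intro qderiv_powr_series) auto
  \<comment> \<open>the \<open>k = 0\<close> term is a constant, which the q-derivative annihilates\<close>
  then have lhs: "(\<lambda>j. of_real (2 * c (Suc j) * (1 - q powr s (Suc j)) / (1 - q\<^sup>2))
        * z powr of_real (s (Suc j) - 2))
      sums (2 / ((1 + of_real q) * z) * qderiv q (\<lambda>w. w powr of_real \<nu> * I3 q (- \<nu>) w) z)"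
    using q(1) by (subst sums_Suc_iff) (simp add: s_def)
  have rhs: "(\<lambda>j. of_real (q powr (- (\<nu> - 1) / 2)) * (of_real (I3_coeff q (1 - \<nu>) j
        * (q powr (1 / 2) / 2) powr (1 - \<nu> + 2 * real j)) * z powr of_real (\<nu> - 1 + (1 - \<nu> + 2 * real j))))
      sums (of_real (q powr (- (\<nu> - 1) / 2))
            * (z powr of_real (\<nu> - 1) * I3 q (1 - \<nu>) (of_real (q powr (1 / 2)) * z)))"
    using q z by (intro sums_mult I3_scaled_sums) auto
  have coeff: "2 * c (Suc j) * (1 - q powr s (Suc j)) / (1 - q\<^sup>2)
      = q powr (- (\<nu> - 1) / 2) * (I3_coeff q (1 - \<nu>) j * (q powr (1 / 2) / 2) powr (1 - \<nu> + 2 * real j))" for j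
  proof -
    have "s (Suc j) = real (2 * Suc j)"
      by (simp add: s_def)
    then have "q powr s (Suc j) = q ^ (2 * Suc j)"
      by (simp only: powr_realpow[OF q(1)])
    then have "2 * c (Suc j) * (1 - q powr s (Suc j)) / (1 - q\<^sup>2)
        = 2 * (1 / 2) powr (- \<nu> + 2 * real (Suc j))
          * (I3_coeff q (- \<nu>) (Suc j) * (1 - q ^ (2 * Suc j)) / (1 - q\<^sup>2))"
      unfolding c_def by (simp add: algebra_simps)
    also have "\<dots> = (1 / 2) powr (1 - \<nu> + 2 * real j) * q powr (1 - \<nu> + real j) * I3_coeff q (1 - \<nu>) j"
      unfolding I3_coeff_raise[OF q] half_powr_pred by (simp add: algebra_simps)
    also have "\<dots> = I3_coeff q (1 - \<nu>) j
        * (q powr ((1 - \<nu> + 2 * real j - \<nu> + 1) / 2) * (1 / 2) powr (1 - \<nu> + 2 * real j))"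
    proof -
      have "(1 - \<nu> + 2 * real j - \<nu> + 1) / 2 = 1 - \<nu> + real j"
        by (simp add: field_simps)
      then show ?thesis
        by (simp only: mult_ac)
    qed
    also have "\<dots> = q powr (- (\<nu> - 1) / 2)
        * (I3_coeff q (1 - \<nu>) j * (q powr (1 / 2) / 2) powr (1 - \<nu> + 2 * real j))"
      unfolding sqrt_half_powr[OF q(1), symmetric] by (simp only: mult_ac)
    finally show ?thesis .
  qed
  have exponent: "s (Suc j) - 2 = \<nu> - 1 + (1 - \<nu> + 2 * real j)" for j
    unfolding s_def by simp
  show ?thesis
    using lhs[unfolded coeff exponent] rhs unfolding of_real_mult mult.assoc by (rule sums_unique2)
qed

section \<open>The function K3\<close>

definition K3_factor :: "real \<Rightarrow> real \<Rightarrow> real" where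
  "K3_factor q \<nu> = 1 / 2 * q powr (- (\<nu>\<^sup>2) + \<nu>) * qGamma (q\<^sup>2) \<nu> * qGamma (q\<^sup>2) (1 - \<nu>)"

lemma K3_formula_eq_factor: "K3_formula q \<nu> z = of_real (K3_factor q \<nu>) * (I3 q (- \<nu>) z - I3 q \<nu> z)"
  unfolding K3_formula_def K3_factor_def ..

lemma K3_factor_reflect: "K3_factor q (1 - \<nu>) = K3_factor q \<nu>"
proof -
  have "- ((1 - \<nu>)\<^sup>2) + (1 - \<nu>) = - (\<nu>\<^sup>2) + \<nu>"
    by (simp add: power2_eq_square algebra_simps)
  moreover have "1 - (1 - \<nu>) = \<nu>"
    by simp
  ultimately show ?thesis
    unfolding K3_factor_def by (simp only: mult_ac)
qed

text \<open>No integrality assumption is needed: at the poles of \<^const>\<open>qGamma\<close> both sides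
  vanish, because \<^const>\<open>qGamma\<close> is \<open>0\<close> there by the convention \<open>x / 0 = 0\<close>.\<close>

lemma K3_factor_pred:
  fixes q \<nu> :: real
  assumes "0 < q" "q < 1"
  shows "K3_factor q (\<nu> - 1) = - K3_factor q \<nu>"
proof -
  define a where "a = q\<^sup>2"
  have a: "0 < a" "a < 1"
    using assms by (auto simp: a_def power_less_one_iff)
  define R where "R x = inverse (qGamma a x)" for x
  define P where "P = q powr (- (\<nu>\<^sup>2) + \<nu>)"
  define t where "t = a powr (\<nu> - 1)"
  define u where "u = 1 - a powr (1 - \<nu>)"
  have "qGamma a y = inverse (R y)" for y
    unfolding R_def by simp
  then have K: "K3_factor q x = 1 / 2 * q powr (- (x\<^sup>2) + x) / (R x * R (1 - x))" for x
    unfolding K3_factor_def a_def[symmetric] by (simp only: divide_inverse inverse_mult_distrib mult.assoc)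
  have R_pred: "R (\<nu> - 1) = - (t * u) / (1 - a) * R \<nu>"
  proof -
    have "a powr (\<nu> - 1) * a powr (1 - \<nu>) = 1"
      using a by (simp flip: powr_add)
    then have "1 - a powr (\<nu> - 1) = - (t * u)"
      unfolding t_def u_def by (simp add: algebra_simps)
    then show ?thesis
      using inverse_qGamma_recurrence[OF a, of "\<nu> - 1"] unfolding R_def by simp
  qed
  have R_refl: "R (1 - \<nu>) = u / (1 - a) * R (2 - \<nu>)"
    using inverse_qGamma_recurrence[OF a, of "1 - \<nu>"] unfolding R_def u_def by (simp add: algebra_simps)
  have "- ((\<nu> - 1)\<^sup>2) + (\<nu> - 1) = (- (\<nu>\<^sup>2) + \<nu>) + 2 * (\<nu> - 1)"
    by (simp add: power2_eq_square algebra_simps)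
  then have pow: "q powr (- ((\<nu> - 1)\<^sup>2) + (\<nu> - 1)) = P * t"
    unfolding P_def t_def a_def powr_power2_base[OF assms(1)] by (simp only: powr_add)
  have "1 - (\<nu> - 1) = 2 - \<nu>"
    by simp
  then have K_pred: "K3_factor q (\<nu> - 1) = 1 / 2 * (P * t) / (- (t * u) / (1 - a) * R \<nu> * R (2 - \<nu>))"
    unfolding K pow R_pred by simp
  have K_nu: "K3_factor q \<nu> = 1 / 2 * P / (R \<nu> * (u / (1 - a) * R (2 - \<nu>)))"
    unfolding K R_refl P_def ..
  have "0 < t" "0 < 1 - a"
    using a by (simp_all add: t_def)
  then have "1 / 2 * (P * t) / (- (t * u) / (1 - a) * R \<nu> * R (2 - \<nu>))
      = - (1 / 2 * P / (R \<nu> * (u / (1 - a) * R (2 - \<nu>))))"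
    by (cases "u = 0 \<or> R \<nu> = 0 \<or> R (2 - \<nu>) = 0") (auto simp: field_simps)
  then show ?thesis
    unfolding K_pred K_nu .
qed

lemma K3_factor_minus:
  fixes q \<nu> :: real
  assumes "0 < q" "q < 1"
  shows "K3_factor q (- \<nu>) = - K3_factor q \<nu>"
proof -
  have "K3_factor q (- \<nu>) = K3_factor q (\<nu> + 1)"
    using K3_factor_reflect[of q "- \<nu>"] by (simp add: add.commute)
  then show ?thesis
    using K3_factor_pred[OF assms, of "\<nu> + 1"] by simp
qed

lemma K3_formula_minus:
  fixes q \<nu> :: real
  assumes "0 < q" "q < 1"
  shows "K3_formula q (- \<nu>) z = K3_formula q \<nu> z"
  unfolding K3_formula_eq_factor K3_factor_minus[OF assms] by (simp add: algebra_simps)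

lemma K3_formula_qderiv:
  fixes q \<nu> :: real and z :: complex
  assumes q: "0 < q" "q < 1" and z: "z \<noteq> 0"
  shows "2 / ((1 + of_real q) * z) * qderiv q (\<lambda>w. w powr of_real \<nu> * K3_formula q \<nu> w) z
       = - of_real (q powr (- (\<nu> - 1) / 2)) * z powr of_real (\<nu> - 1)
           * K3_formula q (\<nu> - 1) (of_real (q powr (1 / 2)) * z)"
proof -
  have split: "(\<lambda>w. w powr of_real \<nu> * K3_formula q \<nu> w)
      = (\<lambda>w. of_real (K3_factor q \<nu>) * (w powr of_real \<nu> * I3 q (- \<nu>) w - w powr of_real \<nu> * I3 q \<nu> w))"
    unfolding K3_formula_eq_factor by (simp add: algebra_simps)
  have "2 / ((1 + of_real q) * z) * qderiv q (\<lambda>w. w powr of_real \<nu> * K3_formula q \<nu> w) z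
      = of_real (K3_factor q \<nu>)
        * (2 / ((1 + of_real q) * z) * qderiv q (\<lambda>w. w powr of_real \<nu> * I3 q (- \<nu>) w) z
           - 2 / ((1 + of_real q) * z) * qderiv q (\<lambda>w. w powr of_real \<nu> * I3 q \<nu> w) z)"
    unfolding split qderiv_scale_diff by (simp add: algebra_simps)
  also have "\<dots> = of_real (K3_factor q \<nu>) * of_real (q powr (- (\<nu> - 1) / 2)) * z powr of_real (\<nu> - 1)
        * (I3 q (1 - \<nu>) (of_real (q powr (1 / 2)) * z) - I3 q (\<nu> - 1) (of_real (q powr (1 / 2)) * z))"
    unfolding I3_qderiv_neg_order[OF q z] I3_qderiv_same_order[OF q z] by (simp add: algebra_simps)
  also have "\<dots> = - of_real (q powr (- (\<nu> - 1) / 2)) * z powr of_real (\<nu> - 1)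
           * K3_formula q (\<nu> - 1) (of_real (q powr (1 / 2)) * z)"
    unfolding K3_formula_eq_factor K3_factor_pred[OF q] by simp
  finally show ?thesis .
qed

lemma tendsto_K3_factor_times_self:
  fixes q :: real
  assumes "0 < q" "q < 1"
  shows "((\<lambda>x. K3_factor q x * x) \<longlongrightarrow> - (1 - q\<^sup>2) / (2 * ln (q\<^sup>2))) (at 0)"
proof -
  define a where "a = q\<^sup>2"
  have a: "0 < a" "a < 1"
    using assms by (auto simp: a_def power_less_one_iff)
  have gamma: "qGamma a x = (1 - a) / (1 - a powr x) * qGamma a (x + 1)" for x
  proof -
    have "qGamma a x = inverse (inverse (qGamma a x))"
      by (rule inverse_inverse_eq [symmetric])
    also have "\<dots> = inverse ((1 - a powr x) / (1 - a) * inverse (qGamma a (x + 1)))"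
      by (subst inverse_qGamma_recurrence[OF a]) (rule refl)
    finally show ?thesis
      by (simp only: inverse_mult_distrib inverse_divide inverse_inverse_eq)
  qed
  have factor: "K3_factor q x * x
      = 1 / 2 * q powr (- (x\<^sup>2) + x) * (1 - a) * (x / (1 - a powr x))
        * qGamma a (x + 1) * qGamma a (1 - x)" for x
    unfolding K3_factor_def a_def[symmetric] gamma[of x] by (simp add: mult_ac)
  have "((\<lambda>x. 1 / 2 * q powr (- (x\<^sup>2) + x) * (1 - a) * (x / (1 - a powr x))
      * qGamma a (x + 1) * qGamma a (1 - x)) \<longlongrightarrow> 1 / 2 * 1 * (1 - a) * (- 1 / ln a) * 1 * 1) (at 0)"
  proof -
    have "((\<lambda>x. q powr (- (x\<^sup>2) + x)) \<longlongrightarrow> q powr (- (0\<^sup>2) + 0)) (at 0)"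
      using assms by (intro tendsto_intros) auto
    then have pow: "((\<lambda>x. q powr (- (x\<^sup>2) + x)) \<longlongrightarrow> 1) (at 0)"
      using assms by simp
    have "qpoch_inf (a powr 1) a \<noteq> 0"
      using qpoch_inf_self_nonzero[OF a] a by simp
    then have cont: "isCont (qGamma a) 1"
      by (rule isCont_qGamma[OF a])
    have "((\<lambda>x. x + 1) \<longlongrightarrow> 1) (at (0::real))" "((\<lambda>x. 1 - x) \<longlongrightarrow> 1) (at (0::real))"
      by (auto intro!: tendsto_eq_intros)
    from this[THEN isCont_tendsto_compose[OF cont]]
    have "((\<lambda>x. qGamma a (x + 1)) \<longlongrightarrow> 1) (at 0)" "((\<lambda>x. qGamma a (1 - x)) \<longlongrightarrow> 1) (at 0)"
      unfolding qGamma_1[OF a] .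
    with pow show ?thesis
      using a by (intro tendsto_mult tendsto_const tendsto_div_one_minus_powr) auto
  qed
  moreover have "1 / 2 * 1 * (1 - a) * (- 1 / ln a) * 1 * 1 = - (1 - q\<^sup>2) / (2 * ln (q\<^sup>2))"
    by (simp add: a_def) (simp only: minus_divide_left minus_diff_eq)
  ultimately show ?thesis
    unfolding factor by (simp only:)
qed

lemma K3_factor_simple_pole:
  fixes q n :: real
  assumes "0 < q" "q < 1" "n \<in> \<int>"
  shows "\<exists>L. ((\<lambda>x. K3_factor q x * (x - n)) \<longlongrightarrow> L) (at n)"
proof -
  obtain i where i: "n = of_int i"
    using assms(3) by (auto elim: Ints_cases)
  have "\<exists>L. ((\<lambda>x. K3_factor q x * (x - of_int i)) \<longlongrightarrow> L) (at (of_int i))"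
  proof (induction i rule: int_induct[where k = 0])
    case base
    then show ?case
      using tendsto_K3_factor_times_self[OF assms(1,2)] by auto
  next
    case (step1 i)
    then obtain L where "((\<lambda>x. K3_factor q x * (x - of_int i)) \<longlongrightarrow> L) (at (of_int i))"
      by blast
    from tendsto_minus[OF LIM_offset[OF this, of "- 1"]]
    have "((\<lambda>x. K3_factor q x * (x - of_int (i + 1))) \<longlongrightarrow> - L) (at (of_int (i + 1)))"
      by (simp add: K3_factor_pred[OF assms(1,2)] algebra_simps)
    then show ?case
      by blast
  next
    case (step2 i)
    have shift: "K3_factor q (x + 1) = - K3_factor q x" for x
      using K3_factor_pred[OF assms(1,2), of "x + 1"] by simp
    from step2 obtain L where "((\<lambda>x. K3_factor q x * (x - of_int i)) \<longlongrightarrow> L) (at (of_int i))"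
      by blast
    from tendsto_minus[OF LIM_offset[OF this, of 1]]
    have "((\<lambda>x. K3_factor q x * (x - of_int (i - 1))) \<longlongrightarrow> - L) (at (of_int (i - 1)))"
      by (simp add: shift algebra_simps)
    then show ?case
      by blast
  qed
  then show ?thesis
    unfolding i .
qed

lemma K3_formula_tendsto:
  fixes q n :: real
  assumes "0 < q" "q < 1" "w \<noteq> 0" "n \<in> \<int>"
  shows "((\<lambda>\<mu>. K3_formula q \<mu> w) \<longlongrightarrow> K3 q n w) (at n)"
proof -
  obtain L where L: "((\<lambda>x. K3_factor q x * (x - n)) \<longlongrightarrow> L) (at n)"
    using K3_factor_simple_pole[OF assms(1,2,4)] by blast
  obtain D where D: "((\<lambda>\<mu>. (I3 q (- \<mu>) w - I3 q \<mu> w) / of_real (\<mu> - n)) \<longlongrightarrow> D) (at n)"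
    using I3_reflection_difference_quotient[OF assms] by blast
  have "((\<lambda>\<mu>. of_real (K3_factor q \<mu> * (\<mu> - n)) * ((I3 q (- \<mu>) w - I3 q \<mu> w) / of_real (\<mu> - n)))
      \<longlongrightarrow> of_real L * D) (at n)"
    using L D by (intro tendsto_intros)
  moreover have "eventually (\<lambda>\<mu>. of_real (K3_factor q \<mu> * (\<mu> - n))
      * ((I3 q (- \<mu>) w - I3 q \<mu> w) / of_real (\<mu> - n))
      = K3_formula q \<mu> w) (at n)"
    unfolding K3_formula_eq_factor eventually_at_filter by (intro always_eventually) auto
  ultimately have lim: "((\<lambda>\<mu>. K3_formula q \<mu> w) \<longlongrightarrow> of_real L * D) (at n)"
    by (rule Lim_transform_eventually)
  moreover have "K3 q n w = of_real L * D"
    unfolding K3_def using assms(4) tendsto_Lim[OF trivial_limit_at lim] by simp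
  ultimately show ?thesis
    by simp
qed

lemma K3_minus:
  fixes q \<nu> :: real
  assumes "0 < q" "q < 1" "w \<noteq> 0"
  shows "K3 q (- \<nu>) w = K3 q \<nu> w"
proof (cases "\<nu> \<in> \<int>")
  case False
  then have "- \<nu> \<notin> \<int>"
    using Ints_minus by force
  then show ?thesis
    unfolding K3_def using False K3_formula_minus[OF assms(1,2)] by simp
next
  case True
  then have "((\<lambda>\<mu>. K3_formula q \<mu> w) \<longlongrightarrow> K3 q (- \<nu>) w) (at (- \<nu>))"
    by (intro K3_formula_tendsto[OF assms]) auto
  moreover have "((\<lambda>\<mu>. K3_formula q (- \<mu>) w) \<longlongrightarrow> K3 q \<nu> w) (at (- \<nu>))"
    using K3_formula_tendsto[OF assms True] by (simp add: filterlim_filtermap flip: filtermap_at_minus)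
  then have "((\<lambda>\<mu>. K3_formula q \<mu> w) \<longlongrightarrow> K3 q \<nu> w) (at (- \<nu>))"
    by (simp add: K3_formula_minus[OF assms(1,2)])
  ultimately show ?thesis
    by (rule tendsto_unique[OF trivial_limit_at])
qed

lemma K3_qderiv:
  fixes q \<nu> :: real and z :: complex
  assumes q: "0 < q" "q < 1" and z: "z \<noteq> 0"
  shows "2 / ((1 + of_real q) * z) * qderiv q (\<lambda>w. w powr of_real \<nu> * K3 q \<nu> w) z
       = - of_real (q powr (- (\<nu> - 1) / 2)) * z powr of_real (\<nu> - 1)
           * K3 q (\<nu> - 1) (of_real (q powr (1 / 2)) * z)"
proof (cases "\<nu> \<in> \<int>")
  case False
  then have "\<nu> - 1 \<notin> \<int>"
    using Ints_add[of "\<nu> - 1" 1] by force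
  then show ?thesis
    using K3_formula_qderiv[OF q z] False unfolding K3_def by simp
next
  case True
  let ?sz = "of_real (q powr (1 / 2)) * z"
  have qz: "of_real q * z \<noteq> 0" and sz: "?sz \<noteq> 0"
    using q z by simp_all
  have "((\<lambda>\<mu>. 2 / ((1 + of_real q) * z) * qderiv q (\<lambda>w. w powr of_real \<mu> * K3_formula q \<mu> w) z)
      \<longlongrightarrow> 2 / ((1 + of_real q) * z) * qderiv q (\<lambda>w. w powr of_real \<nu> * K3 q \<nu> w) z) (at \<nu>)"
    using K3_formula_tendsto[OF q z True] K3_formula_tendsto[OF q qz True]
    by (intro tendsto_mult tendsto_const tendsto_qderiv_powr_mult[OF q z])
  moreover have "((\<lambda>\<mu>. K3_formula q (\<mu> - 1) ?sz) \<longlongrightarrow> K3 q (\<nu> - 1) ?sz) (at \<nu>)"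
    using LIM_offset[OF K3_formula_tendsto[OF q sz], of "\<nu> - 1" "- 1"] True by simp
  then have "((\<lambda>\<mu>. - of_real (q powr (- (\<mu> - 1) / 2)) * z powr of_real (\<mu> - 1) * K3_formula q (\<mu> - 1) ?sz)
      \<longlongrightarrow> - of_real (q powr (- (\<nu> - 1) / 2)) * z powr of_real (\<nu> - 1) * K3 q (\<nu> - 1) ?sz) (at \<nu>)"
    using q z by (intro tendsto_intros tendsto_powr_of_real_exponent) auto
  ultimately show ?thesis
    unfolding K3_formula_qderiv[OF q z] by (rule tendsto_unique[OF trivial_limit_at])
qed

lemma K3_qderiv_minus:
  fixes q \<nu> :: real and z :: complex
  assumes q: "0 < q" "q < 1" and z: "z \<noteq> 0"
  shows "2 / ((1 + of_real q) * z) * qderiv q (\<lambda>w. w powr of_real (- \<nu>) * K3 q \<nu> w) z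
       = - of_real (q powr ((\<nu> + 1) / 2)) * z powr of_real (- \<nu> - 1)
           * K3 q (\<nu> + 1) (of_real (q powr (1 / 2)) * z)"
proof -
  have "of_real q * z \<noteq> 0" "of_real (q powr (1 / 2)) * z \<noteq> 0"
    using q z by simp_all
  then have "qderiv q (\<lambda>w. w powr of_real (- \<nu>) * K3 q (- \<nu>) w) z
        = qderiv q (\<lambda>w. w powr of_real (- \<nu>) * K3 q \<nu> w) z"
      "K3 q (- \<nu> - 1) (of_real (q powr (1 / 2)) * z) = K3 q (\<nu> + 1) (of_real (q powr (1 / 2)) * z)"
    unfolding qderiv_def using K3_minus[OF q] K3_minus[OF q, of _ "\<nu> + 1"] z by simp_all
  moreover have "- (- \<nu> - 1) / 2 = (\<nu> + 1) / 2"
    by simp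
  ultimately show ?thesis
    using K3_qderiv[OF q z, of "- \<nu>"] by (simp only:)
qed

theorem proposition3p1:
  fixes q \<nu> :: real and z :: complex
  assumes "0 < q" "q < 1"
    and "z \<notin> {complex_of_real x | x. x \<le> 0}"
  shows "(2 / ((1 + complex_of_real q) * z)
           * qderiv q (\<lambda>w. w powr complex_of_real \<nu> * K3 q \<nu> w) z
         = - complex_of_real (q powr (- (\<nu> - 1) / 2)) * z powr complex_of_real (\<nu> - 1)
           * K3 q (\<nu> - 1) (complex_of_real (q powr (1/2)) * z))
       \<and> ( 2 / ((1 + complex_of_real q) * z)
           * qderiv q (\<lambda>w. w powr complex_of_real (- \<nu>) * K3 q \<nu> w) z
         = - complex_of_real (q powr ((\<nu> + 1) / 2)) * z powr complex_of_real (- \<nu> - 1)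
           * K3 q (\<nu> + 1) (complex_of_real (q powr (1/2)) * z))"
proof -
  have "z \<noteq> 0"
    using assms(3) by force
  then show ?thesis
    using K3_qderiv[OF assms(1,2)] K3_qderiv_minus[OF assms(1,2)] by simp
qed

end
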